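(* Let $D \subset \mathbb{N} = \{1, 2, 3, \ldots\}$ be a finite set. Then for every non-zero complex polynomial of the form $f(z) = \sum_{d \in D} c_d z^d$ (with $c_d \in \mathbb{C}$) we have \[ \alpha(D) \leq \min(\rho_+(f), \rho_-(f)), \] that is, $\alpha(D) \leq \rho(D)$.
   Context: For $n \geq 1$, the circulant graph $G_n$ with set of distances $D$ has vertex set $\{0, \ldots, n-1\}$, and vertices $u, v$ (possibly equal) are adjacent iff there is $d \in D$ with $u - v \equiv d \pmod n$ or $v - u \equiv d \pmod n$ (so loops may occur when $n \leq \max D$). $\alpha(G)$ denotes the maximum size of an independent set, where an independent set contains no two adjacent vertices and no vertex carrying a loop. $\alpha(D) := \lim_{n\to\infty} \alpha(G_n)/n$ (this limit exists and equals $\sup_n \alpha(G_n)/n$). For such a polynomial $f$, $\rho_+(f)$ (resp. $\rho_-(f)$) is the normalized Lebesgue measure (total measure $1$) of the set of $z$ on the unit circle $|z|=1$ with $\operatorname{Re} f(z) > 0$ (resp. $\operatorname{Re} f(z) < 0$). $\rho(D)$ denotes the minimum of $\min(\rho_+(f), \rho_-(f))$ over all non-zero polynomials $f$ of this form. *)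

theory Defs
  imports "HOL-Analysis.Analysis"
begin

definition circ_adj :: "nat set \<Rightarrow> nat \<Rightarrow> nat \<Rightarrow> nat \<Rightarrow> bool" where
  "circ_adj D n u v \<longleftrightarrow>
     (\<exists>d\<in>D. (int u - int v) mod int n = int d mod int n \<or>
             (int v - int u) mod int n = int d mod int n)"

text \<open>Independent sets: no two (possibly equal) vertices adjacent, so no looped vertex.\<close>
definition circ_indep :: "nat set \<Rightarrow> nat \<Rightarrow> nat set \<Rightarrow> bool" where
  "circ_indep D n S \<longleftrightarrow> S \<subseteq> {..<n} \<and> (\<forall>u\<in>S. \<forall>v\<in>S. \<not> circ_adj D n u v)"

definition circ_alpha :: "nat set \<Rightarrow> nat \<Rightarrow> nat" where
  "circ_alpha D n = Max (card ` {S. circ_indep D n S})"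

definition alpha_D :: "nat set \<Rightarrow> real" where
  "alpha_D D = lim (\<lambda>n. real (circ_alpha D n) / real n)"

definition dpoly :: "nat set \<Rightarrow> (nat \<Rightarrow> complex) \<Rightarrow> complex \<Rightarrow> complex" where
  "dpoly D c z = (\<Sum>d\<in>D. c d * z ^ d)"

text \<open>Normalized Lebesgue measure on the unit circle, parametrized by z = cis(2 pi t), t in [0,1].\<close>
definition rho_plus :: "nat set \<Rightarrow> (nat \<Rightarrow> complex) \<Rightarrow> real" where
  "rho_plus D c = measure lborel {t \<in> {0..1::real}. Re (dpoly D c (cis (2 * pi * t))) > 0}"

definition rho_minus :: "nat set \<Rightarrow> (nat \<Rightarrow> complex) \<Rightarrow> real" where
  "rho_minus D c = measure lborel {t \<in> {0..1::real}. Re (dpoly D c (cis (2 * pi * t))) < 0}"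

end

(*
  Let w = exp(2 pi i / n). A set S of residues mod n is independent in G_n exactly when no
  s - s' + d (s, s' in S, d in D) is divisible by n. If S had more elements than there are
  samples f(w^j), j < n, with positive real part, some trigonometric polynomial
  F(j) = sum_{s in S} a_s w^(j s), not identically zero, would vanish at all of those samples.
  But sum_{j<n} |F(j)|^2 f(w^j) = 0 by orthogonality of the characters j |-> w^(j k), and its
  real part is negative, since Re f(w^j) < 0 wherever F(j) is nonzero. So alpha(G_n) is at most
  the number of positive samples on every rotated grid w^j e^(2 pi i y) avoiding the finitely
  many zeros of Re f on the circle; averaging over y gives alpha(G_n)/n <= rho_+(f). Finally
  alpha(G_n)/n converges to its supremum, because k copies of an independent set of G_m,
  placed m apart, are independent in G_n once k m + max D <= n; and rho_-(f) = rho_+(-f).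
*)

theory Submission
  imports Defs "HOL-Library.Real_Mod" "HOL-Computational_Algebra.Polynomial"
begin

section \<open>Roots of unity\<close>

definition unit_root :: "nat \<Rightarrow> int \<Rightarrow> complex" where
  "unit_root n k = cis (2 * pi * of_int k / real n)"

lemma unit_root_add: "unit_root n (a + b) = unit_root n a * unit_root n b"
  by (simp add: unit_root_def cis_mult add_divide_distrib algebra_simps)

lemma cnj_unit_root: "cnj (unit_root n k) = unit_root n (- k)"
  by (simp add: unit_root_def cis_cnj)

lemma unit_root_power: "unit_root n k ^ m = unit_root n (int m * k)"
proof -
  have "real m * (2 * pi * of_int k / real n) = 2 * pi * of_int (int m * k) / real n"
    by simp
  then show ?thesis
    by (simp only: unit_root_def Complex.DeMoivre)
qed

lemma unit_root_eq_1_iff: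
  assumes "n > 0"
  shows "unit_root n k = 1 \<longleftrightarrow> int n dvd k"
proof
  assume "unit_root n k = 1"
  then obtain m where "2 * pi * of_int k / real n = of_int m * (2 * pi)"
    unfolding unit_root_def cis_eq_1_iff by blast
  then have "real_of_int k = real_of_int (m * int n)"
    using assms by (simp add: field_simps)
  then show "int n dvd k"
    by (simp only: of_int_eq_iff) simp
next
  assume "int n dvd k"
  then obtain m where "k = int n * m" by (elim dvdE)
  then have "2 * pi * of_int k / real n = of_int m * (2 * pi)"
    using assms by simp
  then show "unit_root n k = 1"
    unfolding unit_root_def cis_eq_1_iff by blast
qed

lemma sum_unit_root:
  assumes "n > 0"
  shows "(\<Sum>j<n. unit_root n (int j * k)) = (if int n dvd k then of_nat n else 0)"
proof (cases "int n dvd k")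
  case True
  then have "unit_root n (int j * k) = 1" for j
    using assms by (simp add: unit_root_eq_1_iff)
  with True show ?thesis by simp
next
  case False
  have "unit_root n k ^ n = 1"
    using assms by (simp add: unit_root_power unit_root_eq_1_iff)
  then have "(\<Sum>j<n. unit_root n k ^ j) = 0"
    using False assms by (simp add: geometric_sum unit_root_eq_1_iff)
  then show ?thesis
    using False by (simp add: unit_root_power)
qed

lemma dpoly_unit_root:
  "dpoly D b (unit_root n j) = (\<Sum>d\<in>D. b d * unit_root n (j * int d))"
  by (simp add: dpoly_def unit_root_power mult.commute)

section \<open>Independent sets versus samples at roots of unity\<close>

lemma homogeneous_system_nontrivial_solution:
  fixes R :: "'j \<Rightarrow> 'i \<Rightarrow> 'a::field"
  assumes "finite P" "finite S" "card P < card S"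
  shows "\<exists>a. (\<exists>s\<in>S. a s \<noteq> 0) \<and> (\<forall>j\<in>P. (\<Sum>s\<in>S. R j s * a s) = 0)"
  using assms
proof (induction P arbitrary: S R rule: finite_induct)
  case empty
  then show ?case
    by (intro exI[of _ "\<lambda>_. 1"]) (auto simp: card_gt_0_iff)
next
  case (insert j P)
  show ?case
  proof (cases "\<forall>s\<in>S. R j s = 0")
    case True
    with insert show ?thesis by auto
  next
    case False
    then obtain s0 where s0: "s0 \<in> S" "R j s0 \<noteq> 0" by auto
    define S' where "S' = S - {s0}"
    \<comment> \<open>eliminate the unknown \<open>a s0\<close> by means of equation \<open>j\<close>\<close>
    define R' where "R' = (\<lambda>i s. R i s - R i s0 * R j s / R j s0)"
    have "finite S'" "card P < card S'"
      using insert s0 by (simp_all add: S'_def)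
    from insert.IH[OF this] obtain a' where
      a': "\<exists>s\<in>S'. a' s \<noteq> 0" "\<forall>i\<in>P. (\<Sum>s\<in>S'. R' i s * a' s) = 0" by blast
    define a where "a = a'(s0 := - (\<Sum>s\<in>S'. R j s * a' s) / R j s0)"
    have eliminated: "(\<Sum>s\<in>S. R i s * a s) = (\<Sum>s\<in>S'. R' i s * a' s)" for i
    proof -
      have "(\<Sum>s\<in>S. R i s * a s) = R i s0 * a s0 + (\<Sum>s\<in>S'. R i s * a' s)"
        using s0 insert.prems by (simp add: S'_def sum.remove a_def)
      then show ?thesis
        by (simp add: a_def R'_def sum_distrib_left sum_divide_distrib sum_subtractf
            algebra_simps)
    qed
    have "\<exists>s\<in>S. a s \<noteq> 0"
      using a'(1) by (auto simp: a_def S'_def)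
    moreover have "\<forall>i\<in>insert j P. (\<Sum>s\<in>S. R i s * a s) = 0"
      using a'(2) s0(2) by (simp add: eliminated R'_def)
    ultimately show ?thesis by blast
  qed
qed

lemma trig_poly_nonzero_sample:
  assumes "n > 0" "S \<subseteq> {..<n}" "s0 \<in> S" "a s0 \<noteq> 0"
  shows "\<exists>j<n. (\<Sum>s\<in>S. a s * unit_root n (int j * int s)) \<noteq> 0"
proof -
  have "finite S"
    using assms(2) finite_subset by blast
  have coefficient: "(\<Sum>j<n. unit_root n (int j * (int s - int s0))) = (if s = s0 then of_nat n else 0)"
    if "s \<in> S" for s
  proof -
    have "s < n" "s0 < n"
      using that assms(2,3) by auto
    then have "int n dvd (int s - int s0) \<longleftrightarrow> s = s0"
      by (simp add: mod_eq_dvd_iff[symmetric] flip: of_nat_mod)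
    then show ?thesis
      by (simp add: sum_unit_root[OF assms(1)])
  qed
  have "(\<Sum>j<n. (\<Sum>s\<in>S. a s * unit_root n (int j * int s)) * unit_root n (- (int j * int s0)))
      = (\<Sum>s\<in>S. a s * (\<Sum>j<n. unit_root n (int j * (int s - int s0))))"
    by (simp add: sum_distrib_left sum_distrib_right mult.assoc unit_root_add[symmetric]
        right_diff_distrib sum.swap[of _ "{..<n}"])
  also have "\<dots> = (\<Sum>s\<in>S. if s = s0 then of_nat n * a s else 0)"
    by (intro sum.cong) (auto simp: coefficient)
  also have "\<dots> = of_nat n * a s0"
    using \<open>finite S\<close> assms(3) by simp
  also have "\<dots> \<noteq> 0"
    using assms(1,4) by simp
  finally obtain j where "j \<in> {..<n}"
    and "(\<Sum>s\<in>S. a s * unit_root n (int j * int s)) * unit_root n (- (int j * int s0)) \<noteq> 0"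
    by (rule sum.not_neutral_contains_not_neutral)
  then show ?thesis
    by auto
qed

lemma circ_indep_not_dvd:
  assumes "circ_indep D n S" "s \<in> S" "s' \<in> S" "d \<in> D"
  shows "\<not> int n dvd (int s - int s' + int d)"
proof
  assume "int n dvd (int s - int s' + int d)"
  then have "(int s' - int s) mod int n = int d mod int n"
    by (simp add: mod_eq_dvd_iff dvd_diff_commute algebra_simps)
  then have "circ_adj D n s' s"
    using assms(4) unfolding circ_adj_def by blast
  then show False
    using assms(1-3) unfolding circ_indep_def by blast
qed

lemma circ_indep_orthogonality:
  assumes "n > 0" "circ_indep D n S"
  shows "(\<Sum>j<n. of_real ((cmod (\<Sum>s\<in>S. a s * unit_root n (int j * int s)))\<^sup>2)
            * dpoly D b (unit_root n (int j))) = 0"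
proof -
  define e where "e j s s' d = a s * cnj (a s') * b d * unit_root n (int j * (int s - int s' + int d))"
    for j s s' d
  have expand: "of_real ((cmod (\<Sum>s\<in>S. a s * unit_root n (int j * int s)))\<^sup>2)
      * dpoly D b (unit_root n (int j)) = (\<Sum>s'\<in>S. \<Sum>s\<in>S. \<Sum>d\<in>D. e j s s' d)" for j
    unfolding complex_norm_square
    by (simp add: e_def dpoly_unit_root cnj_sum cnj_unit_root
        sum_distrib_left sum_distrib_right unit_root_add[symmetric] distrib_left
        right_diff_distrib algebra_simps)
  have "(\<Sum>j<n. e j s s' d) = 0" if "s \<in> S" "s' \<in> S" "d \<in> D" for s s' d
    using circ_indep_not_dvd[OF assms(2) that]
    by (simp add: e_def sum_distrib_left[symmetric] sum_unit_root[OF assms(1)])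
  then have "(\<Sum>s'\<in>S. \<Sum>s\<in>S. \<Sum>d\<in>D. \<Sum>j<n. e j s s' d) = 0"
    by simp
  moreover have "(\<Sum>j<n. \<Sum>s'\<in>S. \<Sum>s\<in>S. \<Sum>d\<in>D. e j s s' d)
      = (\<Sum>s'\<in>S. \<Sum>s\<in>S. \<Sum>d\<in>D. \<Sum>j<n. e j s s' d)"
    by (subst sum.swap, rule sum.cong[OF refl], subst sum.swap,
        rule sum.cong[OF refl], rule sum.swap)
  ultimately show ?thesis
    by (simp only: expand)
qed

lemma card_circ_indep_le_positive_samples:
  assumes "n > 0" "circ_indep D n S"
    and nonzero: "\<forall>j<n. Re (dpoly D b (unit_root n (int j))) \<noteq> 0"
  shows "card S \<le> card {j. j < n \<and> Re (dpoly D b (unit_root n (int j))) > 0}"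
proof (rule ccontr)
  define G where "G j = Re (dpoly D b (unit_root n (int j)))" for j
  define P where "P = {j. j < n \<and> G j > 0}"
  have "S \<subseteq> {..<n}"
    using assms(2) by (simp add: circ_indep_def)
  then have "finite S"
    using finite_subset by blast
  assume "\<not> ?thesis"
  then have "card P < card S"
    by (simp add: P_def G_def)
  then obtain a where a: "\<exists>s\<in>S. a s \<noteq> 0"
    "\<forall>j\<in>P. (\<Sum>s\<in>S. unit_root n (int j * int s) * a s) = 0"
    using homogeneous_system_nontrivial_solution[of P S "\<lambda>j s. unit_root n (int j * int s)"]
      \<open>finite S\<close> by (auto simp: P_def)
  define F where "F j = (\<Sum>s\<in>S. a s * unit_root n (int j * int s))" for j
  have F_P: "F j = 0" if "j \<in> P" for j
    using a(2) that unfolding F_def by (metis (no_types, lifting) mult.commute sum.cong)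
  obtain j0 where j0: "j0 < n" "F j0 \<noteq> 0"
    using a(1) trig_poly_nonzero_sample[OF assms(1) \<open>S \<subseteq> {..<n}\<close>] by (auto simp: F_def)
  have orthogonality: "(\<Sum>j<n. (cmod (F j))\<^sup>2 * G j) = 0"
    using arg_cong[OF circ_indep_orthogonality[OF assms(1,2), of a b], of Re]
    by (simp add: Re_sum F_def G_def)
  have negative: "G j < 0" if "j < n" "j \<notin> P" for j
    using nonzero that by (force simp: P_def G_def)
  have "(\<Sum>j<n. (cmod (F j))\<^sup>2 * G j) < (\<Sum>j<n. 0)"
  proof (rule sum_strict_mono_ex1)
    show "\<forall>j\<in>{..<n}. (cmod (F j))\<^sup>2 * G j \<le> 0"
    proof
      fix j assume "j \<in> {..<n}"
      show "(cmod (F j))\<^sup>2 * G j \<le> 0"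
      proof (cases "j \<in> P")
        case True
        then show ?thesis
          using F_P by simp
      next
        case False
        then have "G j < 0"
          using negative \<open>j \<in> {..<n}\<close> by simp
        then show ?thesis
          by (simp add: mult_nonneg_nonpos)
      qed
    qed
    show "\<exists>j\<in>{..<n}. (cmod (F j))\<^sup>2 * G j < 0"
    proof
      have "j0 \<notin> P"
        using j0(2) F_P by blast
      then show "(cmod (F j0))\<^sup>2 * G j0 < 0"
        using j0 negative by (simp add: mult_pos_neg)
    qed (use j0 in simp)
  qed simp
  with orthogonality show False
    by simp
qed

section \<open>Zeros of the real part on the unit circle\<close>

lemma countable_cis_preimage: "countable {t::real. cis (2 * pi * t) = z}"
proof (cases "\<exists>t0. cis (2 * pi * t0) = z")
  case False
  then show ?thesis by simp
next
  case True
  then obtain t0 where t0: "cis (2 * pi * t0) = z" ..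
  have "{t. cis (2 * pi * t) = z} \<subseteq> range (\<lambda>m::int. t0 + of_int m)"
  proof
    fix t assume "t \<in> {t. cis (2 * pi * t) = z}"
    then have "cis (2 * pi * (t - t0)) = 1"
      using t0 by (auto simp: right_diff_distrib cis_divide[symmetric])
    then obtain m where "2 * pi * (t - t0) = of_int m * (2 * pi)"
      unfolding cis_eq_1_iff by blast
    then have "2 * pi * (t - t0 - of_int m) = 0"
      by (simp add: algebra_simps)
    then have "t = t0 + of_int m"
      by simp
    then show "t \<in> range (\<lambda>m::int. t0 + of_int m)" by blast
  qed
  then show ?thesis
    by (rule countable_subset) simp
qed

definition circle_real_part_poly :: "nat set \<Rightarrow> (nat \<Rightarrow> complex) \<Rightarrow> complex poly" where
  "circle_real_part_poly D c =
     (\<Sum>d\<in>D. monom (c d) (Max D + d) + monom (cnj (c d)) (Max D - d))"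

lemma poly_circle_real_part_poly:
  assumes "finite D" "z * cnj z = 1"
  shows "poly (circle_real_part_poly D c) z = z ^ Max D * of_real (2 * Re (dpoly D c z))"
proof -
  have shift: "z ^ Max D * cnj z ^ d = z ^ (Max D - d)" if "d \<in> D" for d
  proof -
    have "z ^ Max D = z ^ (Max D - d) * z ^ d"
      using assms(1) that by (simp add: power_add[symmetric])
    then show ?thesis
      using assms(2) by (simp add: mult.assoc power_mult_distrib[symmetric])
  qed
  have "poly (circle_real_part_poly D c) z
      = (\<Sum>d\<in>D. z ^ Max D * (c d * z ^ d) + z ^ Max D * (cnj (c d) * cnj z ^ d))"
    unfolding circle_real_part_poly_def poly_sum
    by (intro sum.cong refl) (simp add: poly_monom shift[symmetric] power_add algebra_simps)
  also have "\<dots> = z ^ Max D * (dpoly D c z + cnj (dpoly D c z))"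
    by (simp add: dpoly_def sum.distrib sum_distrib_left cnj_sum distrib_left)
  finally show ?thesis
    by (simp add: complex_add_cnj)
qed

lemma coeff_circle_real_part_poly:
  assumes "finite D" "0 \<notin> D" "d0 \<in> D"
  shows "coeff (circle_real_part_poly D c) (Max D + d0) = c d0"
proof -
  have "Max D - d \<noteq> Max D + d0" if "d \<in> D" for d
    using assms that by (metis add_cancel_right_right diff_le_self le_add1 le_antisym neq0_conv)
  then have "coeff (circle_real_part_poly D c) (Max D + d0) = (\<Sum>d\<in>D. if d = d0 then c d else 0)"
    unfolding circle_real_part_poly_def coeff_sum by (intro sum.cong refl) auto
  then show ?thesis
    using assms by simp
qed

lemma countable_Re_dpoly_zeros:
  assumes "finite D" "0 \<notin> D" "\<exists>d\<in>D. c d \<noteq> 0"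
  shows "countable {t::real. Re (dpoly D c (cis (2 * pi * t))) = 0}"
proof -
  have "circle_real_part_poly D c \<noteq> 0"
    using assms coeff_circle_real_part_poly[OF assms(1,2)] by (metis leading_coeff_0_iff coeff_0)
  then have "finite {z. poly (circle_real_part_poly D c) z = 0}"
    by (rule poly_roots_finite)
  moreover have "{t. Re (dpoly D c (cis (2 * pi * t))) = 0}
      \<subseteq> (\<Union>z\<in>{z. poly (circle_real_part_poly D c) z = 0}. {t. cis (2 * pi * t) = z})"
  proof
    fix t assume "t \<in> {t. Re (dpoly D c (cis (2 * pi * t))) = 0}"
    moreover have "cis (2 * pi * t) * cnj (cis (2 * pi * t)) = 1"
      by (simp add: cis_cnj cis_mult)
    ultimately have "poly (circle_real_part_poly D c) (cis (2 * pi * t)) = 0"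
      using poly_circle_real_part_poly[OF assms(1)] by simp
    then show "t \<in> (\<Union>z\<in>{z. poly (circle_real_part_poly D c) z = 0}. {t. cis (2 * pi * t) = z})"
      by blast
  qed
  ultimately show ?thesis
    by (blast intro: countable_subset countable_UN countable_finite countable_cis_preimage)
qed

section \<open>Averaging over rotations\<close>

lemma sum_emeasure_slices_le:
  fixes H :: "real set"
  assumes H: "H \<in> sets borel" and n: "n > 0"
  shows "(\<Sum>j<n. emeasure lborel ({real j / real n ..< real (Suc j) / real n} \<inter> H))
           \<le> emeasure lborel ({0..1} \<inter> H)"
proof -
  define X where "X j = {real j / real n ..< real (Suc j) / real n} \<inter> H" for j
  have disjoint: "disjoint_family_on X {..<n}"
    unfolding disjoint_family_on_def
  proof (intro ballI impI)
    fix i j :: nat assume "i \<noteq> j"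
    have "i = j" if "t \<in> X i" "t \<in> X j" for t
    proof -
      have "real i \<le> t * n" "t * n < real i + 1" "real j \<le> t * n" "t * n < real j + 1"
        using that n by (auto simp: X_def field_simps)
      then show "i = j" by linarith
    qed
    with \<open>i \<noteq> j\<close> show "X i \<inter> X j = {}" by blast
  qed
  have "(\<Sum>j<n. emeasure lborel (X j)) = emeasure lborel (\<Union>j<n. X j)"
    using H by (intro sum_emeasure[OF _ disjoint]) (auto simp: X_def)
  also have "\<dots> \<le> emeasure lborel ({0..1} \<inter> H)"
  proof (intro emeasure_mono subsetI)
    fix t assume "t \<in> (\<Union>j<n. X j)"
    then obtain j where "j < n" "t \<in> X j" by blast
    then have "0 \<le> real j / real n" "real j / real n \<le> t" "t < real (Suc j) / real n"
        "real (Suc j) / real n \<le> 1"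
      using n by (auto simp: X_def field_simps)
    then have "0 \<le> t" "t \<le> 1"
      by linarith+
    with \<open>t \<in> X j\<close> show "t \<in> {0..1} \<inter> H"
      by (simp add: X_def)
  qed (use H in simp)
  finally show ?thesis
    by (simp add: X_def)
qed

lemma measure_ge_shifted_count:
  fixes H :: "real set"
  assumes H: "H \<in> sets borel" and n: "n > 0"
    and count: "AE y in lborel. y \<in> {0..<1 / real n} \<longrightarrow>
                  k \<le> card {j. j < n \<and> real j / real n + y \<in> H}"
  shows "real k / real n \<le> measure lborel ({0..1} \<inter> H)"
proof -
  define X where "X j = {real j / real n ..< real (Suc j) / real n} \<inter> H" for j
  have [measurable]: "X j \<in> sets borel" for j
    using H by (simp add: X_def)
  have translate: "emeasure lborel (X j) = (\<integral>\<^sup>+ y. indicator (X j) (real j / real n + y) \<partial>lborel)" for j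
    using nn_integral_real_affine[of "indicator (X j)" 1 "real j / real n"] by simp
  have "AE y in lborel. of_nat k * indicator {0..<1 / real n} y
      \<le> (\<Sum>j<n. indicator (X j) (real j / real n + y) :: ennreal)"
    using count
  proof eventually_elim
    fix y assume y: "y \<in> {0..<1 / real n} \<longrightarrow> k \<le> card {j. j < n \<and> real j / real n + y \<in> H}"
    show "of_nat k * indicator {0..<1 / real n} y
      \<le> (\<Sum>j<n. indicator (X j) (real j / real n + y) :: ennreal)"
    proof (cases "y \<in> {0..<1 / real n}")
      case True
      then have "real j / real n + y \<in> {real j / real n ..< real (Suc j) / real n}" for j
        using n by (auto simp: field_simps)
      then have "(\<Sum>j<n. indicator (X j) (real j / real n + y) :: ennreal)
          = (\<Sum>j<n. of_bool (real j / real n + y \<in> H))"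
        by (simp add: X_def indicator_def)
      also have "\<dots> = of_nat (card {j. j < n \<and> real j / real n + y \<in> H})"
        by (simp add: Int_def)
      finally show ?thesis
        using True y by simp
    qed simp
  qed
  then have "(\<integral>\<^sup>+ y. of_nat k * indicator {0..<1 / real n} y \<partial>lborel)
      \<le> (\<Sum>j<n. emeasure lborel (X j))"
    by (simp add: translate nn_integral_sum[symmetric] nn_integral_mono_AE)
  also have "\<dots> \<le> emeasure lborel ({0..1} \<inter> H)"
    unfolding X_def by (rule sum_emeasure_slices_le[OF H n])
  finally have "ennreal (real k / real n) \<le> emeasure lborel ({0..1} \<inter> H)"
    using n by (simp add: nn_integral_cmult_indicator ennreal_of_nat_eq_real_of_nat
        ennreal_mult[symmetric] divide_inverse)
  moreover have "emeasure lborel ({0..1} \<inter> H) < \<infinity>"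
    using emeasure_mono[of "{0..1} \<inter> H" "{0..1::real}" lborel] by (auto simp: less_top[symmetric] top_unique)
  ultimately show ?thesis
    by (simp add: emeasure_eq_ennreal_measure ennreal_le_iff less_top)
qed

lemma dpoly_mult: "dpoly D c (w * z) = dpoly D (\<lambda>d. c d * w ^ d) z"
  by (simp add: dpoly_def power_mult_distrib mult.assoc)

lemma cis_shift_eq_mult_unit_root: "cis (2 * pi * (real j / real n + y)) = cis (2 * pi * y) * unit_root n (int j)"
  by (simp add: unit_root_def cis_mult distrib_left add.commute)

lemma circ_indep_card_div_le_rho_plus:
  assumes D: "finite D" "0 \<notin> D" "\<exists>d\<in>D. c d \<noteq> 0"
    and n: "n > 0" and S: "circ_indep D n S"
  shows "real (card S) / real n \<le> rho_plus D c"
proof -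
  define h where "h t = Re (dpoly D c (cis (2 * pi * t)))" for t
  have [measurable]: "h \<in> borel_measurable borel"
    unfolding h_def dpoly_def by (intro borel_measurable_continuous_onI continuous_intros)
  define N where "N = (\<Union>j<n. (\<lambda>t. t - real j / real n) ` {t. h t = 0})"
  have "countable {t. h t = 0}"
    unfolding h_def by (rule countable_Re_dpoly_zeros[OF D])
  then have "N \<in> null_sets lborel"
    unfolding N_def by (intro countable_imp_null_set_lborel) auto
  then have "AE y in lborel. y \<notin> N"
    by (rule AE_not_in)
  then have "AE y in lborel. y \<in> {0..<1 / real n} \<longrightarrow>
      card S \<le> card {j. j < n \<and> real j / real n + y \<in> {t. h t > 0}}"
  proof eventually_elim
    fix y assume "y \<notin> N"
    define b where "b = (\<lambda>d. c d * cis (2 * pi * y) ^ d)"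
    have sample: "h (real j / real n + y) = Re (dpoly D b (unit_root n (int j)))" for j
      by (simp add: h_def b_def cis_shift_eq_mult_unit_root dpoly_mult)
    have "\<forall>j<n. Re (dpoly D b (unit_root n (int j))) \<noteq> 0"
      using \<open>y \<notin> N\<close> by (force simp: N_def sample[symmetric])
    with card_circ_indep_le_positive_samples[OF n S] show "y \<in> {0..<1 / real n} \<longrightarrow>
        card S \<le> card {j. j < n \<and> real j / real n + y \<in> {t. h t > 0}}"
      by (simp add: sample)
  qed
  then have "real (card S) / real n \<le> measure lborel ({0..1} \<inter> {t. h t > 0})"
    by (intro measure_ge_shifted_count n) measurable
  then show ?thesis
    by (simp add: rho_plus_def h_def Int_def)
qed

lemma rho_minus_eq_rho_plus_uminus: "rho_minus D c = rho_plus D (\<lambda>d. - c d)"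
  by (simp add: rho_minus_def rho_plus_def dpoly_def sum_negf)

section \<open>The limit defining alpha(D)\<close>

lemma LIMSEQ_SUP_if_almost_above:
  fixes X :: "nat \<Rightarrow> real"
  assumes "bdd_above (range X)" and "\<And>m. \<exists>C. \<forall>\<^sub>F n in sequentially. X m - C / real n \<le> X n"
  shows "X \<longlonglongrightarrow> (SUP n. X n)"
proof (rule order_tendstoI)
  fix a assume "a > (SUP n. X n)"
  then have "X n < a" for n
    using cSUP_upper[OF _ assms(1), of n] by simp
  then show "\<forall>\<^sub>F n in sequentially. X n < a"
    by simp
next
  fix a assume "a < (SUP n. X n)"
  then obtain m where "a < X m"
    using less_cSUP_iff[OF _ assms(1)] by auto
  obtain C where "\<forall>\<^sub>F n in sequentially. X m - C / real n \<le> X n"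
    using assms(2) by blast
  moreover have "\<forall>\<^sub>F n in sequentially. C / real n < X m - a"
    using \<open>a < X m\<close> by (intro order_tendstoD(2)[OF lim_const_over_n]) simp
  ultimately show "\<forall>\<^sub>F n in sequentially. a < X n"
    by eventually_elim linarith
qed

lemma finite_circ_indep: "finite {S. circ_indep D n S}"
  by (rule finite_subset[of _ "Pow {..<n}"]) (auto simp: circ_indep_def)

lemma card_le_circ_alpha: "circ_indep D n S \<Longrightarrow> card S \<le> circ_alpha D n"
  unfolding circ_alpha_def using finite_circ_indep by (intro Max_ge) auto

lemma circ_alpha_attained: "\<exists>S. circ_indep D n S \<and> card S = circ_alpha D n"
proof -
  have "{} \<in> {S. circ_indep D n S}"
    by (simp add: circ_indep_def)
  then have "circ_alpha D n \<in> card ` {S. circ_indep D n S}"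
    unfolding circ_alpha_def using finite_circ_indep by (intro Max_in) auto
  then show ?thesis by auto
qed

lemma circ_alpha_le: "circ_alpha D n \<le> n"
  using circ_alpha_attained[of D n]
  by (metis card_lessThan card_mono circ_indep_def finite_lessThan)

lemma eq_add_if_diff_mod_eq:
  assumes "(int u - int v) mod int n = int d mod int n" "u < n" "v + d < n"
  shows "u = v + d"
proof -
  have "int u mod int n = int (v + d) mod int n"
    using assms(1) by (simp add: mod_eq_dvd_iff algebra_simps)
  with assms(2,3) show ?thesis
    by (simp flip: of_nat_mod)
qed

lemma circ_adj_without_wraparound:
  assumes "circ_adj D n u v" "u + B < n" "v + B < n" "\<forall>d\<in>D. d \<le> B"
  shows "\<exists>d\<in>D. u = v + d \<or> v = u + d"
proof -
  obtain d where "d \<in> D" and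
    "(int u - int v) mod int n = int d mod int n \<or> (int v - int u) mod int n = int d mod int n"
    using assms(1) unfolding circ_adj_def by blast
  moreover have "u < n" "v < n" "v + d < n" "u + d < n"
    using assms(2-4) \<open>d \<in> D\<close> by fastforce+
  ultimately show ?thesis
    using eq_add_if_diff_mod_eq by blast
qed

lemma circ_indep_blocks:
  assumes S: "circ_indep D m S"
    and B: "\<forall>d\<in>D. d \<le> B" and kn: "k * m + B \<le> n"
  shows "circ_indep D n ((\<lambda>(j, s). j * m + s) ` ({..<k} \<times> S))" (is "circ_indep D n ?T")
proof -
  have "s < m" if "s \<in> S" for s
    using S that by (auto simp: circ_indep_def)
  then have far: "j * m + s + B < n" if "j < k" "s \<in> S" for j s
  proof -
    have "j * m + s < (j + 1) * m"
      using \<open>s \<in> S \<Longrightarrow> s < m\<close> that by simp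
    also have "\<dots> \<le> k * m"
      using that by (intro mult_right_mono) auto
    finally show ?thesis
      using kn by linarith
  qed
  have no_edge: False if "j < k" "s \<in> S" "j' < k" "s' \<in> S" "d \<in> D" "j * m + s = j' * m + s' + d"
    for j s j' s' d
  proof -
    have "int s - int s' = int d + (int j' - int j) * int m"
      using that(6) by (simp add: algebra_simps flip: of_nat_add of_nat_mult)
    then have "circ_adj D m s s'"
      using \<open>d \<in> D\<close> unfolding circ_adj_def by force
    with S that(2,4) show False
      unfolding circ_indep_def by blast
  qed
  have "\<not> circ_adj D n u v" if "u \<in> ?T" "v \<in> ?T" for u v
  proof
    assume "circ_adj D n u v"
    from that obtain j s j' s' where "j < k" "s \<in> S" "u = j * m + s" "j' < k" "s' \<in> S" "v = j' * m + s'"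
      by auto
    with circ_adj_without_wraparound[OF \<open>circ_adj D n u v\<close> _ _ B] far no_edge show False
      by metis
  qed
  moreover have "?T \<subseteq> {..<n}"
    using far by fastforce
  ultimately show ?thesis
    unfolding circ_indep_def by blast
qed

lemma circ_alpha_blocks:
  assumes B: "\<forall>d\<in>D. d \<le> B" and kn: "k * m + B \<le> n"
  shows "k * circ_alpha D m \<le> circ_alpha D n"
proof -
  obtain S where S: "circ_indep D m S" "card S = circ_alpha D m"
    using circ_alpha_attained by blast
  then have "S \<subseteq> {..<m}"
    by (simp add: circ_indep_def)
  then have "finite S"
    by (rule finite_subset) simp
  have "inj_on (\<lambda>(j, s). j * m + s) ({..<k} \<times> S)"
  proof (rule inj_onI, clarify)
    fix j s j' s' assume "s \<in> S" "s' \<in> S" and eq: "j * m + s = j' * m + s'"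
    then have "s < m" "s' < m"
      using \<open>S \<subseteq> {..<m}\<close> by auto
    moreover from \<open>s < m\<close> have "m > 0"
      by linarith
    ultimately have "(j * m + s) div m = j" "(j' * m + s') div m = j'"
        "(j * m + s) mod m = s" "(j' * m + s') mod m = s'"
      by simp_all
    with eq show "j = j' \<and> s = s'"
      by metis
  qed
  then have "card ((\<lambda>(j, s). j * m + s) ` ({..<k} \<times> S)) = k * circ_alpha D m"
    using \<open>finite S\<close> S(2) by (simp add: card_image card_cartesian_product)
  with card_le_circ_alpha[OF circ_indep_blocks[OF S(1) B kn]] show ?thesis
    by simp
qed

lemma circ_alpha_ratio_lower_bound:
  assumes B: "\<forall>d\<in>D. d \<le> B" and m: "m > 0" and n: "B < n"
  shows "real (circ_alpha D m) / m - real (B + m) / n \<le> real (circ_alpha D n) / n"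
proof -
  define k where "k = (n - B) div m"
  define a where "a = real (circ_alpha D m)"
  have "k * m \<le> n - B"
    by (simp add: k_def div_times_less_eq_dividend)
  then have "k * a \<le> real (circ_alpha D n)"
    using circ_alpha_blocks[OF B] n by (simp add: a_def flip: of_nat_mult)
  have "n - B = k * m + (n - B) mod m" "(n - B) mod m < m"
    using m by (simp_all add: k_def)
  then have "real n \<le> real (k * m + (B + m))"
    using n by (simp only: of_nat_le_iff)
  moreover have "a \<le> m"
    using circ_alpha_le[of D m] by (simp add: a_def)
  ultimately have "a * n \<le> a * (k * m + real (B + m)) \<and> a * real (B + m) \<le> m * real (B + m)"
    by (simp add: a_def mult_left_mono mult_right_mono)
  then have "a * n \<le> k * a * m + real (B + m) * m"
    by (simp add: algebra_simps)
  have "a / m - real (B + m) / n = (a * n - real (B + m) * m) / (m * n)"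
    using m n by (simp add: field_simps)
  also have "\<dots> \<le> (k * a * m) / (m * n)"
    using \<open>a * n \<le> k * a * m + real (B + m) * m\<close> by (intro divide_right_mono) simp_all
  also have "\<dots> = k * a / n"
    using m by simp
  also have "\<dots> \<le> real (circ_alpha D n) / n"
    using \<open>k * a \<le> real (circ_alpha D n)\<close> by (simp add: divide_right_mono)
  finally show ?thesis
    by (simp add: a_def)
qed

lemma circ_alpha_ratio_LIMSEQ:
  assumes "finite D"
  shows "(\<lambda>n. real (circ_alpha D n) / n) \<longlonglongrightarrow> alpha_D D"
proof -
  define B where "B = Max (insert 0 D)"
  have B: "\<forall>d\<in>D. d \<le> B"
    using assms by (simp add: B_def)
  have "(\<lambda>n. real (circ_alpha D n) / n) \<longlonglongrightarrow> (SUP n. real (circ_alpha D n) / n)"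
  proof (rule LIMSEQ_SUP_if_almost_above)
    show "bdd_above (range (\<lambda>n. real (circ_alpha D n) / n))"
      using circ_alpha_le by (intro bdd_aboveI[of _ 1]) (auto simp: divide_le_eq_1)
    show "\<exists>C. \<forall>\<^sub>F n in sequentially. real (circ_alpha D m) / m - C / real n \<le> real (circ_alpha D n) / n"
      for m
    proof (cases "m = 0")
      case True
      then show ?thesis by (intro exI[of _ 0]) simp
    next
      case False
      have "\<forall>\<^sub>F n in sequentially. B < n"
        by (rule eventually_gt_at_top)
      then have "\<forall>\<^sub>F n in sequentially.
          real (circ_alpha D m) / m - real (B + m) / n \<le> real (circ_alpha D n) / n"
        by eventually_elim (use circ_alpha_ratio_lower_bound[OF B] False in simp)
      then show ?thesis
        by blast
    qed
  qed
  then show ?thesis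
    unfolding alpha_D_def by (simp add: limI)
qed

lemma alpha_D_le_rho_plus:
  assumes "finite D" "0 \<notin> D" "\<exists>d\<in>D. c d \<noteq> 0"
  shows "alpha_D D \<le> rho_plus D c"
proof (rule LIMSEQ_le_const2[OF circ_alpha_ratio_LIMSEQ[OF assms(1)]], intro exI[of _ 1] allI impI)
  fix n :: nat assume "n \<ge> 1"
  obtain S where S: "circ_indep D n S" "card S = circ_alpha D n"
    using circ_alpha_attained by blast
  from \<open>n \<ge> 1\<close> have "n > 0"
    by simp
  from circ_indep_card_div_le_rho_plus[OF assms this S(1)] S(2)
  show "real (circ_alpha D n) / n \<le> rho_plus D c"
    by simp
qed

theorem theorem2:
  fixes D :: "nat set" and c :: "nat \<Rightarrow> complex"
  assumes "finite D" and "0 \<notin> D"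
    and "\<exists>d\<in>D. c d \<noteq> 0"
  shows "alpha_D D \<le> min (rho_plus D c) (rho_minus D c)"
proof -
  have "alpha_D D \<le> rho_plus D c"
    using alpha_D_le_rho_plus[OF assms] .
  moreover have "alpha_D D \<le> rho_plus D (\<lambda>d. - c d)"
    using alpha_D_le_rho_plus[OF assms(1,2)] assms(3) by simp
  ultimately show ?thesis
    by (simp add: rho_minus_eq_rho_plus_uminus)
qed

end
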